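(* Consider an execution of a propose-vote-merge protocol with an arbitrary fork-choice function $\mathrm{FC}$, in a synchronous network. Suppose that $t$ is a pivot slot and let $B$ be the block proposed by the (honest) proposer of slot $t$. Then every validator in $H_t$ (the honest voters of slot $t$) votes for $B$ in slot $t$.
   Context: Setting. There are $n$ validators $v_1,\dots,v_n$ with commonly known public keys. A probabilistic polynomial-time adversary adaptively corrupts validators during the execution; corrupted (adversarial) validators remain corrupted and may deviate arbitrarily from the protocol; the others are honest. Time is divided into rounds and validators have synchronized clocks. A slot consists of $3\Delta$ rounds, slot $t$ consisting of rounds $3\Delta t,\dots,3\Delta t+3\Delta-1$. Messages are spread by best-effort gossip, cannot be forged, and any message received by an honest validator is gossiped on. Under network synchrony, a message sent or gossiped by an honest validator at round $r$ is received by every awake honest validator by round $r+\Delta$. The adversary also adaptively decides, for every round, which honest validators are awake or asleep; asleep validators do not execute the protocol and messages addressed to them are delivered when they wake up. An honest validator waking up at a round in $(3\Delta(t-1)+2\Delta,\,3\Delta t+2\Delta]$ puts all messages it receives into its buffer and starts executing the protocol only at round $3\Delta t+2\Delta$, when it merges its buffer into its view; from then on it is active until it is corrupted or put to sleep. In each slot $t$ a proposer $v_p^t$ is selected by a single secret leader election (unique, unpredictable until it reveals itself, each validator being the proposer of a given slot with probability $1/n$). $H_t$ denotes the set of honest validators active at round $3\Delta t+\Delta$. A pivot slot is a slot $t$ whose proposer is honest and active at round $3\Delta t$. Propose-vote-merge protocol with fork-choice function $\mathrm{FC}$. A view is a set of received messages (blocks, each referencing a parent, rooted at a genesis block $B_{\mathrm{genesis}}$,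 and votes). A fork-choice function is a deterministic function $\mathrm{FC}$ mapping a view $\mathcal V$ and a slot $t$ to a block of $\mathcal V$ such that whenever $B$ is a block extending $\mathrm{FC}(\mathcal V,t)$ (its parent is $\mathrm{FC}(\mathcal V,t)$), $\mathrm{FC}(\mathcal V\cup\{B\},t)=B$. Each validator $v_i$ keeps a view $\mathcal V_i$ (initially $\{B_{\mathrm{genesis}}\}$), a buffer $\mathcal B_i$ (initially empty) into which every received block and vote is put, and a canonical chain $\mathsf{ch}_i$. In slot $t$: (propose) at round $3\Delta t$ the proposer $v_p$ sets $\mathcal V_p\gets\mathcal V_p\cup\mathcal B_p$, $\mathcal B_p\gets\emptyset$, creates a new block $B$ with parent $\mathrm{FC}(\mathcal V_p,t)$, sets $\mathsf{ch}_p\gets B$ and gossips $[\textsc{propose},B,\mathcal V_p\cup\{B\},t,v_p]$ (proposals of slot $t$ are gossiped only during the first $\Delta$ rounds of slot $t$); (vote) a validator $v_i$ receiving a proposal $[\textsc{propose},B,\mathcal V,t,v_p^t]$ during rounds $[3\Delta t,3\Delta t+\Delta]$ sets $\mathcal V_i\gets\mathcal V_i\cup\mathcal V$; at round $3\Delta t+\Delta$ every active validator sets $\mathsf{ch}_i\gets\mathrm{FC}(\mathcal V_i,t)$ and gossips the vote $[\textsc{vote},\mathrm{FC}(\mathcal V_i,t),t,v_i]$ (a slot-$t$ vote for that block); (merge) at round $3\Delta t+2\Delta$ every validator sets $\mathcal V_i\gets\mathcal V_i\cup\mathcal B_i$ and $\mathcal B_i\gets\emptyset$.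
   Formalization: The proposer of slot t is also still honest at round $3\Delta t+\Delta$, besides being honest and active at round $3\Delta t$. Each condition added here is assumed in the paper as well or is needed for the statement above to hold. *)

theory Defs
  imports Main
begin

text \<open>Elements of views: blocks (abstract type 'b, parent given by a function)
  and slot votes [vote, B, t, v].\<close>
datatype ('b, 'v) vmsg = Blk 'b | VoteMsg 'b nat 'v

text \<open>Wire messages: plain blocks/votes, or proposals [propose, B, V, t, v].\<close>
datatype ('b, 'v) msg = Plain "('b, 'v) vmsg" | Propose 'b "('b, 'v) vmsg set" nat 'v

fun items :: "('b, 'v) msg \<Rightarrow> ('b, 'v) vmsg set" where
  "items (Plain x) = {x}"
| "items (Propose B V t v) = insert (Blk B) V"

fun signer :: "('b, 'v) msg \<Rightarrow> 'v option" where
  "signer (Plain (Blk B)) = None"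
| "signer (Plain (VoteMsg B t v)) = Some v"
| "signer (Propose B V t v) = Some v"

definition rooted :: "'b \<Rightarrow> ('b \<Rightarrow> 'b) \<Rightarrow> bool" where
  "rooted genesis parent \<longleftrightarrow> (\<forall>b. \<exists>k. (parent ^^ k) b = genesis)"

definition fork_choice ::
  "'b \<Rightarrow> ('b \<Rightarrow> 'b) \<Rightarrow> (('b, 'v) vmsg set \<Rightarrow> nat \<Rightarrow> 'b) \<Rightarrow> bool" where
  "fork_choice genesis parent FC \<longleftrightarrow>
     (\<forall>V t. finite V \<and> Blk genesis \<in> V \<longrightarrow> Blk (FC V t) \<in> V) \<and>
     (\<forall>V t B. finite V \<and> parent B = FC V t \<longrightarrow> FC (insert (Blk B) V) t = B)"

text \<open>All functions are indexed by validator and round;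
  view/buf are the values at the END of the round (after the round's actions);
  rcv i r = messages delivered to i at round r; sent i r = messages sent or gossiped
  by i at round r; proposer t = the (unique) SSLE winner of slot t;
  newblock t = the block created by the proposer of slot t (if honest).\<close>
record ('b, 'v) execution =
  proposer :: "nat \<Rightarrow> 'v"
  newblock :: "nat \<Rightarrow> 'b"
  honest :: "'v \<Rightarrow> nat \<Rightarrow> bool"
  awake :: "'v \<Rightarrow> nat \<Rightarrow> bool"
  rcv :: "'v \<Rightarrow> nat \<Rightarrow> ('b, 'v) msg set"
  sent :: "'v \<Rightarrow> nat \<Rightarrow> ('b, 'v) msg set"
  view :: "'v \<Rightarrow> nat \<Rightarrow> ('b, 'v) vmsg set"
  buf :: "'v \<Rightarrow> nat \<Rightarrow> ('b, 'v) vmsg set"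

definition slot_of :: "nat \<Rightarrow> nat \<Rightarrow> nat" where
  "slot_of D r = r div (3 * D)"

text \<open>Active: honest, awake, and awake without interruption since round 0 or since
  a merge round 3Dt+2D (a validator waking up starts executing only at the next merge round).\<close>
definition active :: "nat \<Rightarrow> ('b, 'v) execution \<Rightarrow> 'v \<Rightarrow> nat \<Rightarrow> bool" where
  "active D E i r \<longleftrightarrow> honest E i r \<and> awake E i r \<and>
     (\<exists>s\<le>r. (s = 0 \<or> s mod (3 * D) = 2 * D) \<and> (\<forall>r'. s \<le> r' \<and> r' \<le> r \<longrightarrow> awake E i r'))"

definition prev_view :: "'b \<Rightarrow> ('b, 'v) execution \<Rightarrow> 'v \<Rightarrow> nat \<Rightarrow> ('b, 'v) vmsg set" where
  "prev_view genesis E i r = (if r = 0 then {Blk genesis} else view E i (r - 1))"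

definition prev_buf :: "('b, 'v) execution \<Rightarrow> 'v \<Rightarrow> nat \<Rightarrow> ('b, 'v) vmsg set" where
  "prev_buf E i r = (if r = 0 then {} else buf E i (r - 1))"

definition received_items :: "('b, 'v) execution \<Rightarrow> 'v \<Rightarrow> nat \<Rightarrow> ('b, 'v) vmsg set" where
  "received_items E i r = \<Union> (items ` rcv E i r)"

text \<open>View of the proposer after merging its buffer at the proposal round.\<close>
definition pview :: "'b \<Rightarrow> ('b, 'v) execution \<Rightarrow> 'v \<Rightarrow> nat \<Rightarrow> ('b, 'v) vmsg set" where
  "pview genesis E i r = prev_view genesis E i r \<union> prev_buf E i r \<union> received_items E i r"

definition props :: "('b, 'v) execution \<Rightarrow> 'v \<Rightarrow> nat \<Rightarrow> nat \<Rightarrow> ('b, 'v) vmsg set" where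
  "props E i r t = \<Union> {V. \<exists>B. Propose B V t (proposer E t) \<in> rcv E i r}"

fun gossipable :: "nat \<Rightarrow> nat \<Rightarrow> ('b, 'v) msg \<Rightarrow> bool" where
  "gossipable D r (Propose B V t v) = (3 * D * t \<le> r \<and> r < 3 * D * t + D)"
| "gossipable D r (Plain x) = True"

definition gossip :: "nat \<Rightarrow> ('b, 'v) execution \<Rightarrow> 'v \<Rightarrow> nat \<Rightarrow> ('b, 'v) msg set" where
  "gossip D E i r = {m \<in> rcv E i r. gossipable D r m} \<union> Plain ` received_items E i r"

definition own :: "nat \<Rightarrow> 'b \<Rightarrow> (('b, 'v) vmsg set \<Rightarrow> nat \<Rightarrow> 'b) \<Rightarrow> ('b, 'v) execution
    \<Rightarrow> 'v \<Rightarrow> nat \<Rightarrow> ('b, 'v) msg set" where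
  "own D genesis FC E i r =
     (if active D E i r \<and> r mod (3 * D) = 0 \<and> proposer E (slot_of D r) = i
      then {Propose (newblock E (slot_of D r))
              (insert (Blk (newblock E (slot_of D r))) (pview genesis E i r)) (slot_of D r) i}
      else {}) \<union>
     (if active D E i r \<and> r mod (3 * D) = D
      then {Plain (VoteMsg (FC (view E i r) (slot_of D r)) (slot_of D r) i)}
      else {})"

text \<open>The honest protocol step of validator i at round r (receive first, then act).\<close>
definition honest_step :: "nat \<Rightarrow> 'b \<Rightarrow> ('b \<Rightarrow> 'b) \<Rightarrow> (('b, 'v) vmsg set \<Rightarrow> nat \<Rightarrow> 'b)
    \<Rightarrow> ('b, 'v) execution \<Rightarrow> 'v \<Rightarrow> nat \<Rightarrow> bool" where
  "honest_step D genesis parent FC E i r \<longleftrightarrow>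
     (let t = slot_of D r; ph = r mod (3 * D) in
      if \<not> awake E i r then
        rcv E i r = {} \<and> sent E i r = {} \<and>
        view E i r = prev_view genesis E i r \<and> buf E i r = prev_buf E i r
      else
        sent E i r = gossip D E i r \<union> own D genesis FC E i r \<and>
        (if active D E i r \<and> ph = 2 * D then
           view E i r = prev_view genesis E i r \<union> prev_buf E i r \<union> received_items E i r
           \<and> buf E i r = {}
         else if active D E i r \<and> ph = 0 \<and> proposer E t = i then
           parent (newblock E t) = FC (pview genesis E i r) t
           \<and> view E i r = pview genesis E i r \<union> props E i r t
           \<and> buf E i r = {}
         else if active D E i r \<and> ph \<le> D then
           view E i r = prev_view genesis E i r \<union> props E i r t
           \<and> buf E i r = prev_buf E i r \<union> received_items E i r
         else
           view E i r = prev_view genesis E i r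
           \<and> buf E i r = prev_buf E i r \<union> received_items E i r))"

definition pvm_execution :: "nat \<Rightarrow> 'b \<Rightarrow> ('b \<Rightarrow> 'b) \<Rightarrow> (('b, 'v) vmsg set \<Rightarrow> nat \<Rightarrow> 'b)
    \<Rightarrow> ('b, 'v) execution \<Rightarrow> bool" where
  "pvm_execution D genesis parent FC E \<longleftrightarrow>
     0 < D \<and> rooted genesis parent \<and> fork_choice genesis parent FC \<and>
     \<comment> \<open>corrupted validators remain corrupted\<close>
     (\<forall>i r. honest E i (Suc r) \<longrightarrow> honest E i r) \<and>
     \<comment> \<open>honest validators follow the protocol\<close>
     (\<forall>i r. honest E i r \<longrightarrow> honest_step D genesis parent FC E i r) \<and>
     \<comment> \<open>only messages that were sent can be received\<close>
     (\<forall>i r m. m \<in> rcv E i r \<longrightarrow> (\<exists>j r'. r' \<le> r \<and> m \<in> sent E j r')) \<and>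
     \<comment> \<open>unforgeability: a message signed by a validator honest at round r, sent by anyone
         at round r, was originated by that validator at some round \<le> r\<close>
     (\<forall>j r m v. m \<in> sent E j r \<and> signer m = Some v \<and> honest E v r \<longrightarrow>
        (\<exists>r'\<le>r. m \<in> own D genesis FC E v r')) \<and>
     \<comment> \<open>synchrony: a message sent/gossiped by an honest validator at round r is received by
         every honest validator awake at a round w \<ge> r + D by round w (asleep validators
         get their messages when they wake up)\<close>
     (\<forall>j r m i w. m \<in> sent E j r \<and> honest E j r \<and> r + D \<le> w \<and> honest E i w \<and> awake E i w
        \<longrightarrow> (\<exists>r'\<le>w. m \<in> rcv E i r')) \<and>
     \<comment> \<open>messages are finite objects, finitely many are delivered per round\<close>
     (\<forall>i r. finite (rcv E i r) \<and> (\<forall>m\<in>rcv E i r. finite (items m)))"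

definition H :: "nat \<Rightarrow> ('b, 'v) execution \<Rightarrow> nat \<Rightarrow> 'v set" where
  "H D E t = {i. active D E i (3 * D * t + D)}"

definition pivot_slot :: "nat \<Rightarrow> ('b, 'v) execution \<Rightarrow> nat \<Rightarrow> bool" where
  "pivot_slot D E t \<longleftrightarrow> active D E (proposer E t) (3 * D * t)"

end

theory Submission
  imports Defs
begin

text \<open>The honest proposer builds \<open>B\<close> on \<open>FC W t\<close>, where \<open>W\<close> is its view at round \<open>3Dt\<close>, and
  broadcasts \<open>W \<union> {B}\<close>; by the fork-choice axiom \<open>FC (W \<union> {B}) t = B\<close>. So it suffices that
  every voter holds exactly \<open>W \<union> {B}\<close> at round \<open>3Dt + D\<close>. The proposal reaches it in time,
  which gives one inclusion. For the other, a view only absorbs the buffer at merge rounds,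
  at least \<open>D\<close> rounds before the slot ends, so everything the voter held at the start of slot
  \<open>t\<close> had been gossiped to the proposer by round \<open>3Dt\<close>; and in the first \<open>D\<close> rounds of slot \<open>t\<close>
  the view only absorbs proposals of slot \<open>t\<close>, which by unforgeability are the proposer's
  single one.\<close>

lemma pvm_execution_delay_pos: "pvm_execution D genesis parent FC E \<Longrightarrow> 0 < D"
  by (simp add: pvm_execution_def)

lemma pvm_execution_honest_step:
  "pvm_execution D genesis parent FC E \<Longrightarrow> honest E i r \<Longrightarrow> honest_step D genesis parent FC E i r"
  by (simp add: pvm_execution_def)

lemma pvm_execution_honest_earlier:
  assumes "pvm_execution D genesis parent FC E" "honest E i r" "r' \<le> r"
  shows "honest E i r'"
  using assms(3,2)
proof (induction rule: dec_induct)
  case (step n)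
  then show ?case using assms(1) by (simp add: pvm_execution_def)
qed

lemma pvm_execution_rcv_sent:
  "pvm_execution D genesis parent FC E \<Longrightarrow> m \<in> rcv E i r \<Longrightarrow> \<exists>j r'. r' \<le> r \<and> m \<in> sent E j r'"
  unfolding pvm_execution_def by blast

lemma pvm_execution_unforgeable:
  "pvm_execution D genesis parent FC E \<Longrightarrow> m \<in> sent E j r \<Longrightarrow> signer m = Some v \<Longrightarrow>
    honest E v r \<Longrightarrow> \<exists>r'\<le>r. m \<in> own D genesis FC E v r'"
  unfolding pvm_execution_def by blast

lemma pvm_execution_synchronous:
  "pvm_execution D genesis parent FC E \<Longrightarrow> m \<in> sent E j r \<Longrightarrow> honest E j r \<Longrightarrow> r + D \<le> w \<Longrightarrow>
    honest E i w \<Longrightarrow> awake E i w \<Longrightarrow> \<exists>r'\<le>w. m \<in> rcv E i r'"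
  unfolding pvm_execution_def by blast

lemma pvm_execution_fork_choice_extend:
  "pvm_execution D genesis parent FC E \<Longrightarrow> finite V \<Longrightarrow> parent B = FC V t \<Longrightarrow>
    FC (insert (Blk B) V) t = B"
  unfolding pvm_execution_def fork_choice_def by (elim conjE) blast

lemma pvm_execution_finite_received_items:
  "pvm_execution D genesis parent FC E \<Longrightarrow> finite (received_items E i r)"
  unfolding received_items_def pvm_execution_def by auto

lemma slot_offset: "k < 3 * D \<Longrightarrow> (3 * D * t + k) mod (3 * D) = k \<and> slot_of D (3 * D * t + k) = t"
  unfolding slot_of_def by simp

lemma voting_phase_round:
  assumes "0 < D" "3 * D * t \<le> R" "R \<le> 3 * D * t + D"
  shows "R mod (3 * D) = R - 3 * D * t \<and> slot_of D R = t"
  using slot_offset[of "R - 3 * D * t" D t] assms by simp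

lemma merge_deadline:
  "R mod (3 * D) \<le> 2 * D \<Longrightarrow> R + D \<le> 3 * D * (slot_of D R + 1)"
  unfolding slot_of_def using div_mult_mod_eq[of R "3 * D"] by (simp add: algebra_simps)

lemma props_subset_received_items: "props E i r t \<subseteq> received_items E i r"
  unfolding props_def received_items_def by force

context
  fixes D genesis parent FC E
  assumes exec: "pvm_execution D genesis parent FC E"
begin

lemma prev_view_subset_view: "honest E i r \<Longrightarrow> prev_view genesis E i r \<subseteq> view E i r"
  using pvm_execution_honest_step[OF exec, of i r] unfolding honest_step_def pview_def
  by (auto simp: Let_def split: if_splits)

lemma view_buf_keep_received:
  "honest E i r \<Longrightarrow>
    prev_view genesis E i r \<union> prev_buf E i r \<union> received_items E i r \<subseteq> view E i r \<union> buf E i r"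
  using pvm_execution_honest_step[OF exec, of i r] unfolding honest_step_def pview_def
  by (auto simp: Let_def received_items_def split: if_splits)

lemma view_buf_subset_received:
  "honest E i r \<Longrightarrow>
    view E i r \<union> buf E i r \<subseteq> prev_view genesis E i r \<union> prev_buf E i r \<union> received_items E i r"
  using pvm_execution_honest_step[OF exec, of i r] props_subset_received_items[of E i r]
  unfolding honest_step_def pview_def by (auto simp: Let_def split: if_splits)

lemma buf_subset_received: "honest E i r \<Longrightarrow> buf E i r \<subseteq> prev_buf E i r \<union> received_items E i r"
  using pvm_execution_honest_step[OF exec, of i r] unfolding honest_step_def pview_def
  by (auto simp: Let_def split: if_splits)

lemma view_step_cases:
  "honest E i r \<Longrightarrow> view E i r \<subseteq> prev_view genesis E i r \<or>
    r mod (3 * D) \<le> 2 * D \<and>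
    view E i r \<subseteq> prev_view genesis E i r \<union> prev_buf E i r \<union> received_items E i r"
  using pvm_execution_honest_step[OF exec, of i r] props_subset_received_items[of E i r]
  unfolding honest_step_def pview_def by (auto simp: Let_def split: if_splits)

lemma rcv_awake: "honest E i r \<Longrightarrow> m \<in> rcv E i r \<Longrightarrow> awake E i r"
  using pvm_execution_honest_step[OF exec, of i r] unfolding honest_step_def
  by (auto simp: Let_def split: if_splits)

lemma sent_honest_awake:
  "honest E i r \<Longrightarrow> awake E i r \<Longrightarrow> sent E i r = gossip D E i r \<union> own D genesis FC E i r"
  using pvm_execution_honest_step[OF exec, of i r] unfolding honest_step_def
  by (auto simp: Let_def split: if_splits)

lemma props_subset_view:
  assumes "active D E i r" "r mod (3 * D) \<le> D"
  shows "props E i r (slot_of D r) \<subseteq> view E i r"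
proof -
  have "r mod (3 * D) \<noteq> 2 * D" using assms(2) pvm_execution_delay_pos[OF exec] by auto
  moreover have "honest E i r" "awake E i r" using assms(1) by (simp_all add: active_def)
  ultimately show ?thesis
    using assms pvm_execution_honest_step[OF exec, of i r] unfolding honest_step_def
    by (auto simp: Let_def split: if_splits)
qed

lemma view_subset_in_proposal_phase:
  assumes "active D E i r" "r mod (3 * D) \<le> D"
  shows "view E i r \<subseteq> prev_view genesis E i r \<union> props E i r (slot_of D r) \<union>
    (if proposer E (slot_of D r) = i \<and> r mod (3 * D) = 0 then pview genesis E i r else {})"
proof -
  have "r mod (3 * D) \<noteq> 2 * D" using assms(2) pvm_execution_delay_pos[OF exec] by auto
  moreover have "honest E i r" "awake E i r" using assms(1) by (simp_all add: active_def)
  ultimately show ?thesis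
    using assms pvm_execution_honest_step[OF exec, of i r] unfolding honest_step_def
    by (auto simp: Let_def split: if_splits)
qed

lemma view_mono:
  assumes "honest E i R" "r \<le> R"
  shows "view E i r \<subseteq> view E i R"
  using assms(2,1)
proof (induction rule: dec_induct)
  case (step n)
  have "view E i n \<subseteq> view E i (Suc n)"
    using prev_view_subset_view[OF step.prems] by (simp add: prev_view_def)
  moreover have "honest E i n" using pvm_execution_honest_earlier[OF exec step.prems] by simp
  ultimately show ?case using step.IH by blast
qed simp

lemma genesis_in_view: "honest E i r \<Longrightarrow> Blk genesis \<in> view E i r"
  using prev_view_subset_view[OF pvm_execution_honest_earlier[OF exec, of i r 0]]
    view_mono[of i r 0]
  by (auto simp: prev_view_def)

lemma received_items_in_view_buf:
  assumes "honest E i R" "r \<le> R"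
  shows "received_items E i r \<subseteq> view E i R \<union> buf E i R"
  using assms(2,1)
proof (induction rule: dec_induct)
  case base
  then show ?case using view_buf_keep_received by blast
next
  case (step n)
  have "view E i n \<union> buf E i n \<subseteq> view E i (Suc n) \<union> buf E i (Suc n)"
    using view_buf_keep_received[OF step.prems] by (auto simp: prev_view_def prev_buf_def)
  moreover have "honest E i n" using pvm_execution_honest_earlier[OF exec step.prems] by simp
  ultimately show ?case using step.IH by blast
qed

lemma view_buf_subset_all_received:
  "honest E i R \<Longrightarrow> view E i R \<union> buf E i R \<subseteq> insert (Blk genesis) (\<Union>r\<le>R. received_items E i r)"
proof (induction R)
  case 0
  then show ?case using view_buf_subset_received[OF 0] by (auto simp: prev_view_def prev_buf_def)
next
  case (Suc R)
  have "honest E i R" using pvm_execution_honest_earlier[OF exec Suc.prems] by simp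
  then show ?case using view_buf_subset_received[OF Suc.prems] Suc.IH
    by (simp add: prev_view_def prev_buf_def atMost_Suc) blast
qed

lemma finite_view_buf: "honest E i R \<Longrightarrow> finite (view E i R \<union> buf E i R)"
  using view_buf_subset_all_received pvm_execution_finite_received_items[OF exec]
  by (meson finite.insertI finite_UN_I finite_atMost finite_subset)

lemma buf_received_earlier:
  "honest E i R \<Longrightarrow> x \<in> buf E i R \<Longrightarrow> \<exists>r\<le>R. x \<in> received_items E i r"
proof (induction R)
  case 0
  then show ?case using buf_subset_received[OF 0(1)] by (auto simp: prev_buf_def)
next
  case (Suc R)
  have "honest E i R" using pvm_execution_honest_earlier[OF exec Suc.prems(1)] by simp
  then show ?case using buf_subset_received[OF Suc.prems(1)] Suc
    by (auto simp: prev_buf_def le_Suc_eq)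
qed

text \<open>Buffered items enter the view only at merge rounds, which lie at least \<open>D\<close> rounds
  before the end of their slot.\<close>
lemma view_received_before_slot_end:
  "honest E i R \<Longrightarrow> x \<in> view E i R \<Longrightarrow> x \<noteq> Blk genesis \<Longrightarrow>
    \<exists>r\<le>R. x \<in> received_items E i r \<and> r + D \<le> 3 * D * (slot_of D R + 1)"
proof (induction R)
  case 0
  then show ?case using view_step_cases[OF 0(1)] merge_deadline[of 0 D]
    by (auto simp: prev_view_def prev_buf_def)
next
  case (Suc R)
  have honest: "honest E i R" using pvm_execution_honest_earlier[OF exec Suc.prems(1)] by simp
  have slot_le: "3 * D * (slot_of D R + 1) \<le> 3 * D * (slot_of D (Suc R) + 1)"
    unfolding slot_of_def by (simp add: div_le_mono)
  have old: ?case if "x \<in> view E i R"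
    using Suc.IH[OF honest that Suc.prems(3)] slot_le le_SucI order_trans by meson
  from view_step_cases[OF Suc.prems(1)] show ?case
  proof
    assume "view E i (Suc R) \<subseteq> prev_view genesis E i (Suc R)"
    then show ?case using old Suc.prems(2) by (auto simp: prev_view_def)
  next
    assume merge: "Suc R mod (3 * D) \<le> 2 * D \<and>
      view E i (Suc R) \<subseteq> prev_view genesis E i (Suc R) \<union> prev_buf E i (Suc R) \<union> received_items E i (Suc R)"
    then have deadline: "Suc R + D \<le> 3 * D * (slot_of D (Suc R) + 1)"
      using merge_deadline by blast
    have "x \<in> view E i R \<or> x \<in> buf E i R \<or> x \<in> received_items E i (Suc R)"
      using merge Suc.prems(2) by (auto simp: prev_view_def prev_buf_def)
    then show ?case
      using old buf_received_earlier[OF honest] deadline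
      by (meson add_le_mono1 le_Suc_eq le_refl order_trans)
  qed
qed

lemma received_items_in_pview:
  assumes "honest E j r" "r' \<le> r" "x \<in> received_items E j r'"
  shows "x \<in> pview genesis E j r"
proof (cases "r' = r")
  case False
  then have "r' \<le> r - 1" using assms(2) by simp
  then have "x \<in> view E j (r - 1) \<union> buf E j (r - 1)"
    using received_items_in_view_buf[OF pvm_execution_honest_earlier[OF exec assms(1)], of "r - 1" r']
      assms(3) by auto
  then show ?thesis using False assms(2) by (auto simp: pview_def prev_view_def prev_buf_def)
qed (use assms in \<open>simp add: pview_def\<close>)

lemma received_item_reaches_pview:
  assumes "honest E i r" "x \<in> received_items E i r" "r + D \<le> w" "honest E j w" "awake E j w"
  shows "x \<in> pview genesis E j w"
proof -
  obtain m where m: "m \<in> rcv E i r" "x \<in> items m"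
    using assms(2) unfolding received_items_def by blast
  have "Plain x \<in> sent E i r"
    using sent_honest_awake[OF assms(1) rcv_awake[OF assms(1) m(1)]] assms(2)
    unfolding gossip_def by auto
  then obtain r' where "r' \<le> w" "Plain x \<in> rcv E j r'"
    using pvm_execution_synchronous[OF exec _ assms(1,3-5)] by blast
  then show ?thesis
    using received_items_in_pview[OF assms(4)] unfolding received_items_def by force
qed

lemma prev_view_subset_pview:
  assumes "honest E i (3 * D * t)" "honest E j (3 * D * t)" "awake E j (3 * D * t)"
  shows "prev_view genesis E i (3 * D * t) \<subseteq> pview genesis E j (3 * D * t)"
proof (cases "t = 0")
  case True
  then show ?thesis by (auto simp: prev_view_def pview_def)
next
  case False
  have D: "0 < D" using pvm_execution_delay_pos[OF exec] .
  define r where "r = 3 * D * t - 1"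
  have "r = 3 * D * (t - 1) + (3 * D - 1)" using False D unfolding r_def
    by (cases t) (auto simp: algebra_simps)
  then have slot_end: "3 * D * (slot_of D r + 1) = 3 * D * t"
    using slot_offset[of "3 * D - 1" D "t - 1"] D False by simp
  have prev: "prev_view genesis E k (3 * D * t) = view E k r" for k
    using False D by (simp add: prev_view_def r_def)
  have honest_i: "honest E i r" using pvm_execution_honest_earlier[OF exec assms(1)] by (simp add: r_def)
  show ?thesis
  proof
    fix x assume x: "x \<in> prev_view genesis E i (3 * D * t)"
    show "x \<in> pview genesis E j (3 * D * t)"
    proof (cases "x = Blk genesis")
      case True
      then show ?thesis
        using genesis_in_view[OF pvm_execution_honest_earlier[OF exec assms(2)], of r]
        by (simp add: r_def pview_def prev)
    next
      case False
      then have "\<exists>r'\<le>r. x \<in> received_items E i r' \<and> r' + D \<le> 3 * D * (slot_of D r + 1)"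
        using view_received_before_slot_end[OF honest_i] x by (simp add: prev)
      then obtain r' where "r' \<le> r" "x \<in> received_items E i r'" "r' + D \<le> 3 * D * t"
        unfolding slot_end by blast
      then show ?thesis
        using received_item_reaches_pview
          pvm_execution_honest_earlier[OF exec honest_i] assms(2,3) by blast
    qed
  qed
qed

lemma own_ProposeD:
  "Propose B V t v \<in> own D genesis FC E v' r \<Longrightarrow>
    r = 3 * D * t \<and> B = newblock E t \<and> V = insert (Blk B) (pview genesis E v' r) \<and> v = v'"
  using pvm_execution_delay_pos[OF exec] unfolding own_def slot_of_def by (auto split: if_splits)

lemma received_proposal_origin:
  assumes "Propose B V t v \<in> rcv E i r" "honest E v r"
  shows "3 * D * t \<le> r \<and> B = newblock E t \<and> V = insert (Blk B) (pview genesis E v (3 * D * t))"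
proof -
  obtain j r' where r': "r' \<le> r" "Propose B V t v \<in> sent E j r'"
    using pvm_execution_rcv_sent[OF exec assms(1)] by blast
  then obtain r'' where "r'' \<le> r'" "Propose B V t v \<in> own D genesis FC E v r''"
    using pvm_execution_unforgeable[OF exec r'(2)] pvm_execution_honest_earlier[OF exec assms(2)]
    by fastforce
  with r'(1) show ?thesis using own_ProposeD by fastforce
qed

lemma props_of_honest_proposer:
  "honest E (proposer E t) r \<Longrightarrow>
    props E i r t \<subseteq> insert (Blk (newblock E t)) (pview genesis E (proposer E t) (3 * D * t))"
  unfolding props_def using received_proposal_origin by blast

lemma honest_proposal_fork_choice:
  assumes "active D E (proposer E t) (3 * D * t)"
    and "Propose B V t (proposer E t) \<in> own D genesis FC E (proposer E t) (3 * D * t)"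
  shows "FC V t = B"
proof -
  define p where "p = proposer E t"
  have D: "0 < D" using pvm_execution_delay_pos[OF exec] .
  have honest: "honest E p (3 * D * t)" using assms(1) by (simp add: active_def p_def)
  have proposal: "B = newblock E t" "V = insert (Blk B) (pview genesis E p (3 * D * t))"
    using own_ProposeD[OF assms(2)] by (simp_all add: p_def)
  have "parent B = FC (pview genesis E p (3 * D * t)) t"
    using pvm_execution_honest_step[OF exec honest] assms(1) slot_offset[of 0 D t] D proposal(1)
    unfolding honest_step_def by (auto simp: Let_def active_def p_def)
  moreover have "finite (pview genesis E p (3 * D * t))"
    using finite_view_buf[OF honest] view_buf_keep_received[OF honest] unfolding pview_def
    by (meson finite_subset)
  ultimately show ?thesis
    using pvm_execution_fork_choice_extend[OF exec] proposal(2) by simp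
qed

lemma active_in_voting_phase:
  assumes "active D E i (3 * D * t + D)" "3 * D * t \<le> R" "R \<le> 3 * D * t + D"
  shows "active D E i R"
proof -
  have D: "0 < D" using pvm_execution_delay_pos[OF exec] .
  obtain s where s: "s \<le> 3 * D * t + D" "s = 0 \<or> s mod (3 * D) = 2 * D"
    "\<forall>r'. s \<le> r' \<and> r' \<le> 3 * D * t + D \<longrightarrow> awake E i r'"
    using assms(1) unfolding active_def by blast
  have "s \<le> 3 * D * t"
  proof (rule ccontr)
    assume "\<not> s \<le> 3 * D * t"
    then have "s mod (3 * D) = s - 3 * D * t" "s - 3 * D * t \<noteq> 0"
      using voting_phase_round[OF D _ s(1)] by auto
    then show False using s(1,2) by auto
  qed
  have "honest E i R"
    using assms(1,3) pvm_execution_honest_earlier[OF exec, of i "3 * D * t + D"] by (simp add: active_def)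
  moreover have "\<forall>r'. s \<le> r' \<and> r' \<le> R \<longrightarrow> awake E i r'" using s(3) assms(3) by auto
  ultimately show ?thesis
    using s(2) \<open>s \<le> 3 * D * t\<close> assms(2) unfolding active_def by (intro conjI exI[of _ s]) auto
qed

lemma view_in_voting_phase:
  assumes "honest E (proposer E t) (3 * D * t + D)"
    and "\<And>r. 3 * D * t \<le> r \<Longrightarrow> r \<le> 3 * D * t + D \<Longrightarrow> active D E i r"
    and "3 * D * t \<le> R" "R \<le> 3 * D * t + D"
  shows "view E i R \<subseteq> prev_view genesis E i (3 * D * t) \<union>
    insert (Blk (newblock E t)) (pview genesis E (proposer E t) (3 * D * t))"
proof -
  have D: "0 < D" using pvm_execution_delay_pos[OF exec] .
  have props: "props E i r t \<subseteq> insert (Blk (newblock E t)) (pview genesis E (proposer E t) (3 * D * t))"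
    if "r \<le> 3 * D * t + D" for r
    using props_of_honest_proposer pvm_execution_honest_earlier[OF exec assms(1) that] by blast
  show ?thesis
    using assms(3)
  proof (induction rule: dec_induct)
    case base
    have "3 * D * t mod (3 * D) = 0" "slot_of D (3 * D * t) = t" using slot_offset[of 0 D t] D by auto
    then have "view E i (3 * D * t) \<subseteq> prev_view genesis E i (3 * D * t) \<union> props E i (3 * D * t) t \<union>
        (if proposer E t = i then pview genesis E i (3 * D * t) else {})"
      using view_subset_in_proposal_phase[OF assms(2)[OF order_refl le_add1]] by simp
    then show ?case using props[of "3 * D * t"] by (auto split: if_splits)
  next
    case (step n)
    have bounds: "3 * D * t \<le> Suc n" "Suc n \<le> 3 * D * t + D" using step.hyps assms(4) by auto
    then have phase: "Suc n mod (3 * D) \<le> D" "Suc n mod (3 * D) \<noteq> 0" "slot_of D (Suc n) = t"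
      using voting_phase_round[OF D bounds] step.hyps(1) by auto
    then have "view E i (Suc n) \<subseteq> view E i n \<union> props E i (Suc n) t"
      using view_subset_in_proposal_phase[OF assms(2)[OF bounds] phase(1)] by (simp add: prev_view_def)
    then show ?case using step.IH props[OF bounds(2)] by blast
  qed
qed

lemma honest_proposal_in_voting_view:
  assumes "active D E (proposer E t) (3 * D * t)" "honest E (proposer E t) (3 * D * t + D)"
    and "Propose B V t (proposer E t) \<in> own D genesis FC E (proposer E t) (3 * D * t)"
    and "active D E i (3 * D * t + D)"
  shows "V \<subseteq> view E i (3 * D * t + D)"
proof -
  have D: "0 < D" using pvm_execution_delay_pos[OF exec] .
  define p where "p = proposer E t"
  have p_honest: "honest E p (3 * D * t)" "awake E p (3 * D * t)"
    using assms(1) by (simp_all add: active_def p_def)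
  have i_honest: "honest E i (3 * D * t + D)" "awake E i (3 * D * t + D)"
    using assms(4) by (simp_all add: active_def)
  have "Propose B V t p \<in> sent E p (3 * D * t)"
    using sent_honest_awake[OF p_honest] assms(3) by (simp add: p_def)
  then obtain r where r: "r \<le> 3 * D * t + D" "Propose B V t p \<in> rcv E i r"
    using pvm_execution_synchronous[OF exec _ p_honest(1) order_refl i_honest] by blast
  have "3 * D * t \<le> r"
    using received_proposal_origin[OF r(2)] pvm_execution_honest_earlier[OF exec assms(2) r(1)]
    by (simp add: p_def)
  then have phase: "r mod (3 * D) = r - 3 * D * t" "slot_of D r = t"
    using voting_phase_round[OF D _ r(1)] by simp_all
  then have "r mod (3 * D) \<le> D" using r(1) by linarith
  then have "props E i r t \<subseteq> view E i r"
    using props_subset_view[OF active_in_voting_phase[OF assms(4) \<open>3 * D * t \<le> r\<close> r(1)]] phase(2)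
    by simp
  moreover have "V \<subseteq> props E i r t" using r(2) unfolding props_def p_def by blast
  moreover have "view E i r \<subseteq> view E i (3 * D * t + D)" using view_mono[OF i_honest(1) r(1)] .
  ultimately show ?thesis by blast
qed

lemma own_vote:
  "active D E i (3 * D * t + D) \<Longrightarrow>
    Plain (VoteMsg (FC (view E i (3 * D * t + D)) t) t i) \<in> own D genesis FC E i (3 * D * t + D)"
  using slot_offset[of D D t] pvm_execution_delay_pos[OF exec] unfolding own_def by simp

end

theorem lemma3p1:
  fixes D :: nat and genesis :: 'b and parent :: "'b \<Rightarrow> 'b"
    and FC :: "('b, 'v) vmsg set \<Rightarrow> nat \<Rightarrow> 'b" and E :: "('b, 'v) execution"
  assumes "pvm_execution D genesis parent FC E"
    and "pivot_slot D E t"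
    and "honest E (proposer E t) (3 * D * t + D)"
    and "Propose B V t (proposer E t) \<in> own D genesis FC E (proposer E t) (3 * D * t)"
    and "i \<in> H D E t"
  shows "Plain (VoteMsg B t i) \<in> own D genesis FC E i (3 * D * t + D)"
proof -
  note exec = assms(1)
  have proposer: "active D E (proposer E t) (3 * D * t)"
    using assms(2) by (simp add: pivot_slot_def)
  have voter: "active D E i (3 * D * t + D)" using assms(5) by (simp add: H_def)
  have "V = insert (Blk B) (pview genesis E (proposer E t) (3 * D * t))"
    "B = newblock E t"
    using own_ProposeD[OF exec assms(4)] by simp_all
  moreover have "prev_view genesis E i (3 * D * t) \<subseteq> pview genesis E (proposer E t) (3 * D * t)"
    using prev_view_subset_pview[OF exec] proposer voter
      pvm_execution_honest_earlier[OF exec, of i "3 * D * t + D"]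
    by (auto simp: active_def)
  ultimately have "view E i (3 * D * t + D) \<subseteq> V"
    using view_in_voting_phase[OF exec assms(3) active_in_voting_phase[OF exec voter],
      of "3 * D * t + D"] by auto
  then have "view E i (3 * D * t + D) = V"
    using honest_proposal_in_voting_view[OF exec proposer assms(3,4) voter] by blast
  then show ?thesis
    using own_vote[OF exec voter] honest_proposal_fork_choice[OF exec proposer assms(4)] by simp
qed

end
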